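(* Let $\chi>0$, $\phi\in C^1(\mathbb{R})$ with $\phi'>0$, $\phi(0)>0$, and $g\in C^1([0,\infty))$ positive with exactly one $\beta>0$ such that $g'<0$ on $[0,\beta)$ and $g'>0$ on $(\beta,\infty)$. Let $g(\beta)<u_-<\min\{g(0),\lim_{V\to\infty}g(V)\}$, $0<v_+<\beta<v_-$ with $g(v_\pm)=u_-$, and let $s>\chi\phi(0)$ be a speed for which, for all small $\epsilon>0$, there is a traveling pulse $(U,V)(\xi)$, $\xi=x-st$, of $u_t=(\epsilon u_x-\chi u\phi(v_x))_x$, $\epsilon v_t=v_{xx}+u-g(v)$, with $U(\pm\infty)=u_-=:u_+$, $V(\pm\infty)=v_\pm$, $U',V'\to0$ at $\pm\infty$ (as provided by the existence theorem for $\chi\phi(0)<s<s_*$). Then this traveling pulse is linearly unstable in $X=BUC(\mathbb{R};\mathbb{R}^2)$: for $\epsilon>0$ sufficiently small, the essential spectrum of the linearized operator $\mathcal{L}$ on $X$ contains a point $\lambda$ with $\operatorname{Re}\lambda>0$.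
   Context: $BUC(\mathbb{R};\mathbb{R}^2)$ is the space of bounded uniformly continuous functions with the sup norm (complexified for spectral questions). The linearized operator is $\mathcal{L}=D(\xi)\partial_{\xi\xi}+M(\xi)\partial_\xi+N(\xi)I$ with domain $BUC^2(\mathbb{R};\mathbb{R}^2)$ (functions with $\mathbf p,\mathbf p',\mathbf p''\in BUC$), where $D=\begin{pmatrix}\epsilon & -\chi U\phi'(V')\\ 0 & 1/\epsilon\end{pmatrix}$, $M=\begin{pmatrix}s-\chi\phi(V') & -\chi(U\phi'(V'))'\\ 0 & s\end{pmatrix}$, $N=\begin{pmatrix}-\chi(\phi(V'))' & 0\\ 1/\epsilon & -g'(V)/\epsilon\end{pmatrix}$. The essential spectrum is the spectrum minus the isolated eigenvalues of finite multiplicity. Linear instability means the spectrum contains points with positive real part.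
   Formalization: For each small $\epsilon>0$ the pulse also has $U\phi'(V')$ differentiable on all of R, so the entry $-\chi(U\phi'(V'))'$ of M exists as a derivative. The statement above fails without it. *)

theory Defs
  imports "HOL-Analysis.Analysis"
begin

text \<open>Elements of the (complexified) space X = BUC(R;R^2) are represented as
functions real => complex * complex; the norm is the sup over x of the norm of p x.\<close>

type_synonym cfun2 = "real \<Rightarrow> complex \<times> complex"

definition buc :: "(real \<Rightarrow> 'a::real_normed_vector) \<Rightarrow> bool" where
  "buc f \<longleftrightarrow> bounded (range f) \<and> uniformly_continuous_on UNIV f"

definition sup_norm :: "cfun2 \<Rightarrow> real" where
  "sup_norm p = (SUP x. norm (p x))"

definition buc2 :: "cfun2 \<Rightarrow> bool" where
  "buc2 p \<longleftrightarrow>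
     (\<forall>x. p differentiable (at x)) \<and>
     (\<forall>x. (\<lambda>y. vector_derivative p (at y)) differentiable (at x)) \<and>
     buc p \<and> buc (\<lambda>x. vector_derivative p (at x)) \<and>
     buc (\<lambda>x. vector_derivative (\<lambda>y. vector_derivative p (at y)) (at x))"

definition Xspace :: "cfun2 set" where "Xspace = {p. buc p}"
definition Dom2 :: "cfun2 set" where "Dom2 = {p. buc2 p}"

definition csc :: "complex \<Rightarrow> complex \<times> complex \<Rightarrow> complex \<times> complex" where
  "csc c z = (c * fst z, c * snd z)"

text \<open>The linearized operator L = D d^2 + M d + N, with dg the derivative of g.\<close>
definition lin_op ::
  "real \<Rightarrow> real \<Rightarrow> real \<Rightarrow> (real \<Rightarrow> real) \<Rightarrow> (real \<Rightarrow> real) \<Rightarrow>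
   (real \<Rightarrow> real) \<Rightarrow> (real \<Rightarrow> real) \<Rightarrow> cfun2 \<Rightarrow> cfun2" where
  "lin_op \<epsilon> chi s \<phi> dg U V p \<xi> =
    (let V1 = deriv V;
         p1 = vector_derivative p (at \<xi>);
         p2 = vector_derivative (\<lambda>\<eta>. vector_derivative p (at \<eta>)) (at \<xi>);
         d11 = \<epsilon>;
         d12 = - chi * U \<xi> * deriv \<phi> (V1 \<xi>);
         d22 = 1 / \<epsilon>;
         m11 = s - chi * \<phi> (V1 \<xi>);
         m12 = - chi * deriv (\<lambda>\<eta>. U \<eta> * deriv \<phi> (V1 \<eta>)) \<xi>;
         m22 = s;
         n11 = - chi * deriv (\<lambda>\<eta>. \<phi> (V1 \<eta>)) \<xi>;
         n21 = 1 / \<epsilon>;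
         n22 = - dg (V \<xi>) / \<epsilon>
     in (of_real d11 * fst p2 + of_real d12 * snd p2 + of_real m11 * fst p1
           + of_real m12 * snd p1 + of_real n11 * fst (p \<xi>),
         of_real d22 * snd p2 + of_real m22 * snd p1 + of_real n21 * fst (p \<xi>)
           + of_real n22 * snd (p \<xi>)))"

definition shiftop :: "complex \<Rightarrow> (cfun2 \<Rightarrow> cfun2) \<Rightarrow> cfun2 \<Rightarrow> cfun2" where
  "shiftop lam L p = (\<lambda>x. csc lam (p x) - L p x)"

definition in_resolvent :: "(cfun2 \<Rightarrow> cfun2) \<Rightarrow> complex \<Rightarrow> bool" where
  "in_resolvent L lam \<longleftrightarrow> bij_betw (shiftop lam L) Dom2 Xspace \<and>
      (\<exists>C. \<forall>p\<in>Dom2. sup_norm p \<le> C * sup_norm (shiftop lam L p))"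

definition spec :: "(cfun2 \<Rightarrow> cfun2) \<Rightarrow> complex set" where
  "spec L = {lam. \<not> in_resolvent L lam}"

primrec gen_eigsp :: "(cfun2 \<Rightarrow> cfun2) \<Rightarrow> complex \<Rightarrow> nat \<Rightarrow> cfun2 set" where
  "gen_eigsp L lam 0 = {\<lambda>x. 0}"
| "gen_eigsp L lam (Suc k) = {p \<in> Dom2. shiftop lam L p \<in> gen_eigsp L lam k}"

definition fin_dim_c :: "cfun2 set \<Rightarrow> bool" where
  "fin_dim_c S \<longleftrightarrow> (\<exists>B. finite B \<and>
      (\<forall>p\<in>S. \<exists>c. p = (\<lambda>x. \<Sum>b\<in>B. csc (c b) (b x))))"

definition isolated_eig_finite_mult :: "(cfun2 \<Rightarrow> cfun2) \<Rightarrow> complex \<Rightarrow> bool" where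
  "isolated_eig_finite_mult L lam \<longleftrightarrow>
     lam \<in> spec L \<and>
     (\<exists>r>0. \<forall>\<mu>\<in>spec L. dist \<mu> lam < r \<longrightarrow> \<mu> = lam) \<and>
     (\<exists>p\<in>Dom2. p \<noteq> (\<lambda>x. 0) \<and> shiftop lam L p = (\<lambda>x. 0)) \<and>
     fin_dim_c (\<Union>k. gen_eigsp L lam k)"

definition ess_spec :: "(cfun2 \<Rightarrow> cfun2) \<Rightarrow> complex set" where
  "ess_spec L = spec L - {lam. isolated_eig_finite_mult L lam}"

text \<open>Traveling pulse (U,V)(xi), xi = x - s t, of
  u_t = (eps u_x - chi u phi(v_x))_x,  eps v_t = v_xx + u - g(v).\<close>
definition traveling_pulse ::
  "real \<Rightarrow> real \<Rightarrow> real \<Rightarrow> (real \<Rightarrow> real) \<Rightarrow> (real \<Rightarrow> real) \<Rightarrow>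
   real \<Rightarrow> real \<Rightarrow> real \<Rightarrow> (real \<Rightarrow> real) \<Rightarrow> (real \<Rightarrow> real) \<Rightarrow> bool" where
  "traveling_pulse \<epsilon> chi s \<phi> g um vp vm U V \<longleftrightarrow>
     (\<forall>\<xi>. U differentiable (at \<xi>)) \<and>
     (\<forall>\<xi>. V differentiable (at \<xi>)) \<and>
     (\<forall>\<xi>. V \<xi> \<ge> 0) \<and>
     (\<forall>\<xi>. ((\<lambda>\<eta>. \<epsilon> * deriv U \<eta> - chi * U \<eta> * \<phi> (deriv V \<eta>))
             has_real_derivative (- s * deriv U \<xi>)) (at \<xi>)) \<and>
     (\<forall>\<xi>. (deriv V has_real_derivative
             (- \<epsilon> * s * deriv V \<xi> - U \<xi> + g (V \<xi>))) (at \<xi>)) \<and>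
     (U \<longlongrightarrow> um) at_top \<and> (U \<longlongrightarrow> um) at_bot \<and>
     (V \<longlongrightarrow> vp) at_top \<and> (V \<longlongrightarrow> vm) at_bot \<and>
     (deriv U \<longlongrightarrow> 0) at_top \<and> (deriv U \<longlongrightarrow> 0) at_bot \<and>
     (deriv V \<longlongrightarrow> 0) at_top \<and> (deriv V \<longlongrightarrow> 0) at_bot"

end

theory Submission
  imports Defs
begin

text \<open>
  Freezing the coefficients of the linearization at their limits as \<open>\<xi> \<rightarrow> +\<infinity>\<close> gives a
  constant-coefficient operator with eigenfunctions \<open>e\<^sup>i\<^sup>k\<^sup>\<xi> w\<close>, whose eigenvalues are the
  roots \<open>\<lambda>\<close> of the dispersion relation \<open>det (\<lambda> - A(k)) = 0\<close> of its symbol \<open>A(k)\<close>.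
  Wave packets \<open>e\<^sup>i\<^sup>k\<^sup>\<xi> w / (1 - i(\<xi> - a)/b)\<^sup>2\<close> of large width \<open>b\<close>, centred far to the
  right, are approximate eigenfunctions of the linearization itself, so every such root lies in its
  spectrum. At \<open>k = 0\<close> the root \<open>-g'(v\<^sub>+)/\<epsilon>\<close> is positive since \<open>v\<^sub>+ < \<beta>\<close>, and for small
  \<open>k \<noteq> 0\<close> there are roots close to but different from it, so it is not an isolated eigenvalue
  and belongs to the essential spectrum.

  The estimates need bounded coefficients and \<open>m\<^sub>1\<^sub>2 \<rightarrow> 0\<close>. If the operator maps \<open>BUC\<^sup>2\<close>
  into \<open>BUC\<close>, testing it on \<open>e\<^sup>i\<^sup>\<xi> w\<close> shows that its coefficients are bounded and uniformly
  continuous, and Barbalat's lemma gives \<open>m\<^sub>1\<^sub>2 \<rightarrow> 0\<close>; otherwise no \<open>\<lambda> - L\<close> is onto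
  \<open>X\<close> and the spectrum is all of \<open>\<complex>\<close>.
\<close>

lemma buc_if_bounded_derivative:
  fixes f :: "real \<Rightarrow> 'b::real_normed_vector"
  assumes f': "\<And>x. (f has_vector_derivative f' x) (at x)"
    and "bounded (range f')" "bounded (range f)"
  shows "buc f"
proof -
  obtain B where B: "B > 0" "\<And>x. norm (f' x) \<le> B"
    using assms(2) by (auto simp: bounded_pos)
  have "B-lipschitz_on UNIV f"
  proof (rule bounded_derivative_imp_lipschitz)
    show "(f has_derivative (\<lambda>h. h *\<^sub>R f' x)) (at x within UNIV)" for x
      using f'[of x] by (simp add: has_vector_derivative_def)
    show "onorm (\<lambda>h. h *\<^sub>R f' x) \<le> B" for x
      using B(2)[of x] by (simp add: onorm_scaleR_left[OF bounded_linear_ident] onorm_id)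
  qed (use B in auto)
  then show ?thesis
    using assms(3) lipschitz_on_uniformly_continuous by (auto simp: buc_def)
qed

lemma buc_bounded_linear:
  assumes "bounded_linear h" "buc f"
  shows "buc (\<lambda>x. h (f x))"
proof -
  have "range (\<lambda>x. h (f x)) = h ` range f" by auto
  then show ?thesis
    using assms bounded_linear_image bounded_linear.uniformly_continuous_on
    unfolding buc_def by metis
qed

lemma buc_const: "buc (\<lambda>x. c)"
  by (simp add: buc_def uniformly_continuous_on_const)

lemma buc_diff:
  fixes f g :: "real \<Rightarrow> 'b::real_normed_vector"
  assumes "buc f" "buc g"
  shows "buc (\<lambda>x. f x - g x)"
  using assms by (simp add: buc_def bounded_minus_comp uniformly_continuous_on_diff)

lemma buc_Re: "buc f \<Longrightarrow> buc (\<lambda>x. Re (f x))"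
  by (rule buc_bounded_linear[OF bounded_linear_Re])

lemma buc_Im: "buc f \<Longrightarrow> buc (\<lambda>x. Im (f x))"
  by (rule buc_bounded_linear[OF bounded_linear_Im])

lemma buc_mult:
  fixes f g :: "real \<Rightarrow> 'b::real_normed_algebra"
  assumes "buc f" "buc g"
  shows "buc (\<lambda>x. f x * g x)"
proof -
  obtain Bf Bg where Bf: "\<And>x. norm (f x) \<le> Bf" and Bg: "\<And>x. norm (g x) \<le> Bg"
    using assms unfolding buc_def bounded_iff by blast
  have "norm (f x * g x) \<le> Bf * Bg" for x
  proof -
    have "norm (f x) * norm (g x) \<le> Bf * Bg"
      using order_trans[OF norm_ge_zero Bf] by (intro mult_mono Bf Bg) auto
    then show ?thesis
      using norm_mult_ineq order_trans by blast
  qed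
  then have "bounded (range (\<lambda>x. f x * g x))"
    unfolding bounded_iff by blast
  moreover have "uniformly_continuous_on UNIV (\<lambda>x. f x * g x)"
    unfolding uniformly_continuous_on_sequentially dist_norm tendsto_norm_zero_iff
  proof (intro allI impI)
    fix x y :: "nat \<Rightarrow> real"
    assume "(\<forall>n. x n \<in> UNIV) \<and> (\<forall>n. y n \<in> UNIV) \<and> (\<lambda>n. x n - y n) \<longlonglongrightarrow> 0"
    then have "(\<lambda>n. f (x n) - f (y n)) \<longlonglongrightarrow> 0" "(\<lambda>n. g (x n) - g (y n)) \<longlonglongrightarrow> 0"
      using assms
      unfolding buc_def uniformly_continuous_on_sequentially dist_norm tendsto_norm_zero_iff
      by auto
    then have "Zfun (\<lambda>n. f (x n) - f (y n)) sequentially" "Zfun (\<lambda>n. g (x n) - g (y n)) sequentially"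
      by (simp_all add: tendsto_Zfun_iff)
    moreover have "Bfun (\<lambda>n. g (x n)) sequentially" "Bfun (\<lambda>n. f (y n)) sequentially"
      by (auto intro!: BseqI' Bf Bg)
    ultimately have "Zfun (\<lambda>n. (f (x n) - f (y n)) * g (x n) + f (y n) * (g (x n) - g (y n))) sequentially"
      by (intro Zfun_add bounded_bilinear.Zfun_prod_Bfun[OF bounded_bilinear_mult]
          bounded_bilinear.Bfun_prod_Zfun[OF bounded_bilinear_mult])
    then show "(\<lambda>n. f (x n) * g (x n) - f (y n) * g (y n)) \<longlonglongrightarrow> 0"
      by (simp add: tendsto_Zfun_iff algebra_simps)
  qed
  ultimately show ?thesis
    by (simp add: buc_def)
qed

lemma approx_eigenfunctions_imp_spec:
  assumes "\<And>\<delta>. \<delta> > 0 \<Longrightarrow>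
    \<exists>p\<in>Dom2. (\<exists>x. norm (p x) \<ge> 1) \<and> (\<forall>x. norm (shiftop lam L p x) \<le> \<delta>)"
  shows "lam \<in> spec L"
proof (rule ccontr)
  assume "lam \<notin> spec L"
  then obtain C where C: "\<forall>p\<in>Dom2. sup_norm p \<le> C * sup_norm (shiftop lam L p)"
    and bij: "bij_betw (shiftop lam L) Dom2 Xspace"
    unfolding spec_def in_resolvent_def by auto
  define \<delta> where "\<delta> = 1 / (2 * (\<bar>C\<bar> + 1))"
  have "\<delta> > 0"
    unfolding \<delta>_def by (simp add: add_pos_nonneg)
  then obtain p x where p: "p \<in> Dom2" "norm (p x) \<ge> 1" "\<forall>x. norm (shiftop lam L p x) \<le> \<delta>"
    using assms by blast
  have "bounded (range p)" "bounded (range (shiftop lam L p))"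
    using p(1) bij_betw_imp_surj_on[OF bij]
    by (auto simp: Dom2_def buc2_def Xspace_def buc_def)
  then have bdd: "bdd_above (range (\<lambda>x. norm (p x)))" "bdd_above (range (\<lambda>x. norm (shiftop lam L p x)))"
    by (auto simp: bounded_iff bdd_above_def)
  have S0: "0 \<le> sup_norm (shiftop lam L p)"
    unfolding sup_norm_def by (rule order_trans[OF norm_ge_zero cSUP_upper[OF UNIV_I bdd(2)]])
  have "1 \<le> sup_norm p"
    unfolding sup_norm_def using p(2) by (rule order_trans[OF _ cSUP_upper[OF UNIV_I bdd(1)]])
  also have "\<dots> \<le> \<bar>C\<bar> * sup_norm (shiftop lam L p)"
    using C p(1) S0 by (meson abs_ge_self mult_right_mono order_trans)
  also have "\<dots> \<le> \<bar>C\<bar> * \<delta>"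
    unfolding sup_norm_def using p(3) by (intro mult_left_mono cSUP_least) auto
  finally have "1 \<le> \<bar>C\<bar> * \<delta>" .
  then show False
    unfolding \<delta>_def by (simp add: field_simps)
qed

lemma nonisolated_spec_imp_ess_spec:
  assumes "lam \<in> spec L" "\<And>r. r > 0 \<Longrightarrow> \<exists>\<mu>\<in>spec L. \<mu> \<noteq> lam \<and> dist \<mu> lam < r"
  shows "lam \<in> ess_spec L"
  using assms unfolding ess_spec_def isolated_eig_finite_mult_def by blast

lemma not_buc_imp_spec_UNIV:
  assumes "p \<in> Dom2" "\<not> buc (shiftop 0 L p)"
  shows "spec L = UNIV"
proof -
  have "\<not> in_resolvent L lam" for lam
  proof
    assume "in_resolvent L lam"
    then have "buc (shiftop lam L p)"
      using assms(1) bij_betw_imp_surj_on unfolding in_resolvent_def Xspace_def by blast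
    moreover have "bounded_linear (csc lam)"
      unfolding csc_def
      by (intro bounded_linear_Pair bounded_linear_compose[OF bounded_linear_mult_right]
          bounded_linear_fst bounded_linear_snd)
    then have "buc (\<lambda>x. csc lam (p x))"
      using assms(1) buc_bounded_linear by (auto simp: Dom2_def buc2_def)
    ultimately have "buc (\<lambda>x. shiftop lam L p x - csc lam (p x))"
      by (rule buc_diff)
    moreover have "(\<lambda>x. shiftop lam L p x - csc lam (p x)) = shiftop 0 L p"
      by (simp add: fun_eq_iff shiftop_def csc_def prod_eq_iff)
    ultimately show False
      using assms(2) by simp
  qed
  then show ?thesis
    unfolding spec_def by auto
qed

lemma spec_UNIV_imp_ess_spec:
  assumes "spec L = UNIV"
  shows "lam \<in> ess_spec L"
proof (rule nonisolated_spec_imp_ess_spec)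
  fix r :: real
  assume "r > 0"
  then show "\<exists>\<mu>\<in>spec L. \<mu> \<noteq> lam \<and> dist \<mu> lam < r"
    using assms by (intro bexI[of _ "lam + of_real (r/2)"]) (auto simp: dist_norm)
qed (use assms in simp)

section \<open>Coefficients of the linearization\<close>

lemma profile_in_Dom2:
  fixes \<rho> \<rho>1 \<rho>2 \<rho>3 :: "real \<Rightarrow> complex" and w1 w2 :: complex
  assumes d1: "\<And>x. (\<rho> has_vector_derivative \<rho>1 x) (at x)"
    and d2: "\<And>x. (\<rho>1 has_vector_derivative \<rho>2 x) (at x)"
    and d3: "\<And>x. (\<rho>2 has_vector_derivative \<rho>3 x) (at x)"
    and bdd: "bounded (range \<rho>)" "bounded (range \<rho>1)" "bounded (range \<rho>2)" "bounded (range \<rho>3)"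
  shows "(\<lambda>x. (\<rho> x * w1, \<rho> x * w2)) \<in> Dom2"
    and "vector_derivative (\<lambda>x. (\<rho> x * w1, \<rho> x * w2)) (at x) = (\<rho>1 x * w1, \<rho>1 x * w2)"
    and "vector_derivative (\<lambda>y. vector_derivative (\<lambda>x. (\<rho> x * w1, \<rho> x * w2)) (at y)) (at x)
           = (\<rho>2 x * w1, \<rho>2 x * w2)"
proof -
  have scaled: "((\<lambda>x. (f x * w1, f x * w2)) has_vector_derivative (f' x * w1, f' x * w2)) (at x)"
    if "\<And>x. (f has_vector_derivative f' x) (at x)" for f f' :: "real \<Rightarrow> complex" and x
    by (intro has_vector_derivative_Pair has_vector_derivative_mult_left that)
  have vd: "(\<lambda>y. vector_derivative (\<lambda>x. (f x * w1, f x * w2)) (at y)) = (\<lambda>x. (f' x * w1, f' x * w2))"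
    if "\<And>x. (f has_vector_derivative f' x) (at x)" for f f' :: "real \<Rightarrow> complex"
    using scaled[OF that] vector_derivative_at by blast
  have buc_scaled: "buc (\<lambda>x. (f x * w1, f x * w2))" if "buc f" for f :: "real \<Rightarrow> complex"
    by (rule buc_bounded_linear[OF _ that]) (intro bounded_linear_Pair bounded_linear_mult_left)
  show "vector_derivative (\<lambda>x. (\<rho> x * w1, \<rho> x * w2)) (at x) = (\<rho>1 x * w1, \<rho>1 x * w2)"
    using vd[OF d1] by metis
  then show "vector_derivative (\<lambda>y. vector_derivative (\<lambda>x. (\<rho> x * w1, \<rho> x * w2)) (at y)) (at x)
      = (\<rho>2 x * w1, \<rho>2 x * w2)"
    using vd[OF d1] vd[OF d2] by metis
  have "buc \<rho>" "buc \<rho>1" "buc \<rho>2"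
    using buc_if_bounded_derivative d1 d2 d3 bdd by blast+
  then show "(\<lambda>x. (\<rho> x * w1, \<rho> x * w2)) \<in> Dom2"
    unfolding Dom2_def buc2_def mem_Collect_eq vd[OF d1] vd[OF d2]
    using scaled[OF d1] scaled[OF d2] by (auto intro: differentiableI_vector buc_scaled)
qed

definition coef_d12 :: "real \<Rightarrow> (real \<Rightarrow> real) \<Rightarrow> (real \<Rightarrow> real) \<Rightarrow> (real \<Rightarrow> real) \<Rightarrow> real \<Rightarrow> real" where
  "coef_d12 chi \<phi> U V \<xi> = - chi * U \<xi> * deriv \<phi> (deriv V \<xi>)"

definition coef_m11 :: "real \<Rightarrow> real \<Rightarrow> (real \<Rightarrow> real) \<Rightarrow> (real \<Rightarrow> real) \<Rightarrow> real \<Rightarrow> real" where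
  "coef_m11 chi s \<phi> V \<xi> = s - chi * \<phi> (deriv V \<xi>)"

definition coef_m12 :: "real \<Rightarrow> (real \<Rightarrow> real) \<Rightarrow> (real \<Rightarrow> real) \<Rightarrow> (real \<Rightarrow> real) \<Rightarrow> real \<Rightarrow> real" where
  "coef_m12 chi \<phi> U V \<xi> = - chi * deriv (\<lambda>\<eta>. U \<eta> * deriv \<phi> (deriv V \<eta>)) \<xi>"

definition coef_n11 :: "real \<Rightarrow> (real \<Rightarrow> real) \<Rightarrow> (real \<Rightarrow> real) \<Rightarrow> real \<Rightarrow> real" where
  "coef_n11 chi \<phi> V \<xi> = - chi * deriv (\<lambda>\<eta>. \<phi> (deriv V \<eta>)) \<xi>"

definition coef_n22 :: "real \<Rightarrow> (real \<Rightarrow> real) \<Rightarrow> (real \<Rightarrow> real) \<Rightarrow> real \<Rightarrow> real" where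
  "coef_n22 \<epsilon> dg V \<xi> = - dg (V \<xi>) / \<epsilon>"

lemma shiftop_lin_op_profile:
  assumes "p x = (r0 * w1, r0 * w2)"
    and "vector_derivative p (at x) = (r1 * w1, r1 * w2)"
    and "vector_derivative (\<lambda>y. vector_derivative p (at y)) (at x) = (r2 * w1, r2 * w2)"
  shows "shiftop lam (lin_op \<epsilon> chi s \<phi> dg U V) p x =
    (lam * (r0 * w1) - (of_real \<epsilon> * (r2 * w1) + of_real (coef_d12 chi \<phi> U V x) * (r2 * w2)
        + of_real (coef_m11 chi s \<phi> V x) * (r1 * w1) + of_real (coef_m12 chi \<phi> U V x) * (r1 * w2)
        + of_real (coef_n11 chi \<phi> V x) * (r0 * w1)),
     lam * (r0 * w2) - (of_real (1/\<epsilon>) * (r2 * w2) + of_real s * (r1 * w2)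
        + of_real (1/\<epsilon>) * (r0 * w1) + of_real (coef_n22 \<epsilon> dg V x) * (r0 * w2)))"
  using assms
  by (simp add: shiftop_def csc_def lin_op_def Let_def coef_d12_def coef_m11_def coef_m12_def
      coef_n11_def coef_n22_def)

lemma cis_has_vector_derivative:
  "((\<lambda>x. c * cis x) has_vector_derivative (c * \<i>) * cis x) (at x)"
proof -
  have "((\<lambda>z. c * exp (\<i> * z)) has_field_derivative (c * \<i>) * exp (\<i> * of_real x)) (at (of_real x))"
    by (auto intro!: derivative_eq_intros)
  from has_vector_derivative_real_field[OF this] show ?thesis
    by (simp add: cis_conv_exp)
qed

lemma lin_op_cis_profile:
  shows "(\<lambda>x. (cis x * w1, cis x * w2)) \<in> Dom2"
    and "cnj (cis x) * fst (shiftop 0 (lin_op \<epsilon> chi s \<phi> dg U V) (\<lambda>x. (cis x * w1, cis x * w2)) x)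
      = (of_real \<epsilon> - of_real (coef_n11 chi \<phi> V x) - \<i> * of_real (coef_m11 chi s \<phi> V x)) * w1
        + (of_real (coef_d12 chi \<phi> U V x) - \<i> * of_real (coef_m12 chi \<phi> U V x)) * w2"
    and "cnj (cis x) * snd (shiftop 0 (lin_op \<epsilon> chi s \<phi> dg U V) (\<lambda>x. (cis x * w1, cis x * w2)) x)
      = (of_real (1/\<epsilon>) - \<i> * of_real s - of_real (coef_n22 \<epsilon> dg V x)) * w2 - of_real (1/\<epsilon>) * w1"
proof -
  have d1: "(cis has_vector_derivative \<i> * cis x) (at x)" for x
    using cis_has_vector_derivative[of 1 x] by simp
  have d2: "((\<lambda>x. \<i> * cis x) has_vector_derivative - cis x) (at x)" for x
    using cis_has_vector_derivative[of \<i> x] by simp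
  have d3: "((\<lambda>x. - cis x) has_vector_derivative - \<i> * cis x) (at x)" for x
    using cis_has_vector_derivative[of "-1" x] by simp
  have "bounded (range cis)" "bounded (range (\<lambda>x. \<i> * cis x))"
    "bounded (range (\<lambda>x. - cis x))" "bounded (range (\<lambda>x. - \<i> * cis x))"
    by (auto simp: bounded_iff norm_mult)
  note P = profile_in_Dom2[OF d1 d2 d3 this]
  show "(\<lambda>x. (cis x * w1, cis x * w2)) \<in> Dom2"
    by (rule P(1))
  have cancel: "cnj (cis x) * (cis x * z) = z" for z
    by (simp add: cis_cnj cis_mult mult.assoc[symmetric])
  note S = shiftop_lin_op_profile[where p="\<lambda>x. (cis x * w1, cis x * w2)" and ?r0.0="cis x" and lam=0,
      OF refl P(2,3)]
  show "cnj (cis x) * fst (shiftop 0 (lin_op \<epsilon> chi s \<phi> dg U V) (\<lambda>x. (cis x * w1, cis x * w2)) x)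
      = (of_real \<epsilon> - of_real (coef_n11 chi \<phi> V x) - \<i> * of_real (coef_m11 chi s \<phi> V x)) * w1
        + (of_real (coef_d12 chi \<phi> U V x) - \<i> * of_real (coef_m12 chi \<phi> U V x)) * w2" (is "_ * ?f = ?q")
  proof -
    have "?f = cis x * ?q"
      unfolding S by (simp add: algebra_simps)
    then show ?thesis
      by (simp only: cancel)
  qed
  show "cnj (cis x) * snd (shiftop 0 (lin_op \<epsilon> chi s \<phi> dg U V) (\<lambda>x. (cis x * w1, cis x * w2)) x)
      = (of_real (1/\<epsilon>) - \<i> * of_real s - of_real (coef_n22 \<epsilon> dg V x)) * w2 - of_real (1/\<epsilon>) * w1" (is "_ * ?f = ?q")
  proof -
    have "?f = cis x * ?q"
      unfolding S by (simp add: algebra_simps)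
    then show ?thesis
      by (simp only: cancel)
  qed
qed

lemma coefficients_buc:
  assumes "\<forall>p\<in>Dom2. buc (shiftop 0 (lin_op \<epsilon> chi s \<phi> dg U V) p)"
  shows "buc (coef_d12 chi \<phi> U V)" "buc (coef_m11 chi s \<phi> V)" "buc (coef_m12 chi \<phi> U V)"
    "buc (coef_n11 chi \<phi> V)" "buc (coef_n22 \<epsilon> dg V)"
proof -
  let ?p = "\<lambda>w1 w2 x. (cis x * w1, cis x * w2)"
  have "(cis has_vector_derivative \<i> * cis x) (at x)" for x
    using cis_has_vector_derivative[of 1 x] by simp
  then have "buc cis"
    by (rule buc_if_bounded_derivative) (auto simp: bounded_iff norm_mult)
  then have "buc (cnj \<circ> cis)"
    using buc_bounded_linear[OF bounded_linear_cnj] by (simp add: comp_def)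
  then have "buc (\<lambda>x. cnj (cis x) * fst (shiftop 0 (lin_op \<epsilon> chi s \<phi> dg U V) (?p w1 w2) x))"
    "buc (\<lambda>x. cnj (cis x) * snd (shiftop 0 (lin_op \<epsilon> chi s \<phi> dg U V) (?p w1 w2) x))" for w1 w2
    using assms lin_op_cis_profile(1) by (auto intro!: buc_mult buc_bounded_linear[OF bounded_linear_fst]
        buc_bounded_linear[OF bounded_linear_snd] simp: comp_def)
  note F = this[unfolded lin_op_cis_profile(2,3)]
  have n11_m11: "buc (\<lambda>x. of_real \<epsilon> - of_real (coef_n11 chi \<phi> V x) - \<i> * of_real (coef_m11 chi s \<phi> V x))"
    using F(1)[where ?w1.0=1 and ?w2.0=0] by simp
  have d12_m12: "buc (\<lambda>x. of_real (coef_d12 chi \<phi> U V x) - \<i> * of_real (coef_m12 chi \<phi> U V x))"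
    using F(1)[where ?w1.0=0 and ?w2.0=1] by simp
  have n22: "buc (\<lambda>x. of_real (1/\<epsilon>) - \<i> * of_real s - of_real (coef_n22 \<epsilon> dg V x))"
    using F(2)[where ?w1.0=0 and ?w2.0=1] by simp
  show "buc (coef_n11 chi \<phi> V)"
    using buc_diff[OF buc_const buc_Re[OF n11_m11], of \<epsilon>] by simp
  show "buc (coef_m11 chi s \<phi> V)"
    using buc_diff[OF buc_const buc_Im[OF n11_m11], of 0] by simp
  show "buc (coef_d12 chi \<phi> U V)"
    using buc_Re[OF d12_m12] by simp
  show "buc (coef_m12 chi \<phi> U V)"
    using buc_diff[OF buc_const buc_Im[OF d12_m12], of 0] by simp
  show "buc (coef_n22 \<epsilon> dg V)"
    using buc_diff[OF buc_const buc_Re[OF n22], of "1/\<epsilon>"] by simp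
qed

lemma Barbalat_lemma:
  fixes h h' :: "real \<Rightarrow> real"
  assumes h_deriv: "\<And>x. (h has_real_derivative h' x) (at x)"
    and "(h \<longlongrightarrow> c) at_top" and "uniformly_continuous_on UNIV h'"
  shows "(h' \<longlongrightarrow> 0) at_top"
proof (rule tendstoI)
  fix e :: real
  assume "e > 0"
  then obtain d where "d > 0" and d: "\<And>x y. dist y x < d \<Longrightarrow> \<bar>h' y - h' x\<bar> < e/2"
    using assms(3) unfolding uniformly_continuous_on_def dist_real_def
    by (metis UNIV_I half_gt_zero)
  define \<eta> where "\<eta> = d/2"
  have \<eta>: "0 < \<eta>" "\<eta> < d"
    using \<open>d > 0\<close> by (auto simp: \<eta>_def)
  have "eventually (\<lambda>x. dist (h x) c < e * \<eta> / 4) at_top"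
    using assms(2) \<eta> \<open>e > 0\<close> by (intro tendstoD) auto
  then obtain N where N: "\<And>x. x \<ge> N \<Longrightarrow> \<bar>h x - c\<bar> < e * \<eta> / 4"
    by (auto simp: eventually_at_top_linorder dist_real_def)
  have "\<bar>h' x\<bar> < e" if "x \<ge> N" for x
  proof (rule ccontr)
    assume "\<not> \<bar>h' x\<bar> < e"
    obtain z where z: "x < z" "z < x + \<eta>" "h (x + \<eta>) - h x = \<eta> * h' z"
      using MVT2[of x "x + \<eta>" h h'] h_deriv \<eta> by auto
    have "dist z x < d"
      using z \<eta> by (simp add: dist_real_def)
    then have "\<bar>h' z - h' x\<bar> < e/2"
      by (rule d)
    then have "e/2 \<le> \<bar>h' z\<bar>"
      using \<open>\<not> \<bar>h' x\<bar> < e\<close> by arith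
    then have "\<eta> * (e/2) \<le> \<eta> * \<bar>h' z\<bar>"
      using \<eta> by (intro mult_left_mono) auto
    also have "\<dots> = \<bar>h (x + \<eta>) - h x\<bar>"
      using z \<eta> by (simp add: abs_mult)
    also have "\<dots> < e * \<eta> / 2"
      using N[of x] N[of "x + \<eta>"] \<open>x \<ge> N\<close> \<eta> by linarith
    finally show False
      by simp
  qed
  then show "eventually (\<lambda>x. dist (h' x) 0 < e) at_top"
    unfolding eventually_at_top_linorder dist_real_def by auto
qed

lemma coef_m12_tendsto_0:
  assumes "chi \<noteq> 0"
    and diff: "\<forall>\<xi>. (\<lambda>\<eta>. U \<eta> * deriv \<phi> (deriv V \<eta>)) differentiable (at \<xi>)"
    and "((\<lambda>\<eta>. U \<eta> * deriv \<phi> (deriv V \<eta>)) \<longlongrightarrow> l) at_top"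
    and "buc (coef_m12 chi \<phi> U V)"
  shows "(coef_m12 chi \<phi> U V \<longlongrightarrow> 0) at_top"
proof -
  define h where "h = (\<lambda>\<eta>. U \<eta> * deriv \<phi> (deriv V \<eta>))"
  have "(h has_real_derivative deriv h x) (at x)" for x
    using diff unfolding h_def by (simp add: DERIV_deriv_iff_real_differentiable)
  moreover have "deriv h = (\<lambda>x. (-1/chi) * coef_m12 chi \<phi> U V x)"
    using \<open>chi \<noteq> 0\<close> by (auto simp: fun_eq_iff coef_m12_def h_def)
  then have "uniformly_continuous_on UNIV (deriv h)"
    using assms(4) by (simp only: buc_def uniformly_continuous_on_cmul_left)
  ultimately have "(deriv h \<longlongrightarrow> 0) at_top"
    using assms(3) Barbalat_lemma unfolding h_def by blast
  then have "((\<lambda>x. - chi * deriv h x) \<longlongrightarrow> - chi * 0) at_top"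
    by (intro tendsto_intros)
  then show ?thesis
    by (simp add: coef_m12_def[abs_def] h_def)
qed

lemma coef_limits_at_top:
  fixes U V \<phi> g dg :: "real \<Rightarrow> real"
  assumes \<phi>: "\<forall>x. (\<phi> has_real_derivative deriv \<phi> x) (at x)" "continuous_on UNIV (deriv \<phi>)"
    and g: "continuous_on {0..} dg" "\<forall>x\<ge>0. (g has_real_derivative dg x) (at x within {0..})"
    and vp: "vp > 0" "g vp = um"
    and "chi > 0"
    and pulse: "traveling_pulse \<epsilon> chi s \<phi> g um vp vm U V"
    and diff: "\<forall>\<xi>. (\<lambda>\<eta>. U \<eta> * deriv \<phi> (deriv V \<eta>)) differentiable (at \<xi>)"
    and m12: "buc (coef_m12 chi \<phi> U V)"
  shows "(coef_d12 chi \<phi> U V \<longlongrightarrow> - chi * um * deriv \<phi> 0) at_top"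
    "(coef_m11 chi s \<phi> V \<longlongrightarrow> s - chi * \<phi> 0) at_top"
    "(coef_m12 chi \<phi> U V \<longlongrightarrow> 0) at_top"
    "(coef_n11 chi \<phi> V \<longlongrightarrow> 0) at_top"
    "(coef_n22 \<epsilon> dg V \<longlongrightarrow> - dg vp / \<epsilon>) at_top"
proof -
  have V': "\<forall>\<xi>. (deriv V has_real_derivative (- \<epsilon> * s * deriv V \<xi> - U \<xi> + g (V \<xi>))) (at \<xi>)"
    and U: "(U \<longlongrightarrow> um) at_top" and V: "(V \<longlongrightarrow> vp) at_top" and "(deriv V \<longlongrightarrow> 0) at_top"
    using pulse unfolding traveling_pulse_def by auto
  have "isCont (deriv \<phi>) 0" "isCont \<phi> 0"
    using \<phi> continuous_on_eq_continuous_at DERIV_isCont by blast+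
  then have \<phi>'V': "((\<lambda>x. deriv \<phi> (deriv V x)) \<longlongrightarrow> deriv \<phi> 0) at_top"
    and \<phi>V': "((\<lambda>x. \<phi> (deriv V x)) \<longlongrightarrow> \<phi> 0) at_top"
    using isCont_tendsto_compose \<open>(deriv V \<longlongrightarrow> 0) at_top\<close> by blast+
  have "at vp within {0..} = at vp"
    using vp(1) by (intro at_within_interior) simp
  moreover have "(g has_real_derivative dg vp) (at vp within {0..})"
    using g(2) vp(1) by simp
  ultimately have "isCont dg vp" "(g has_real_derivative dg vp) (at vp)"
    using g(1) vp(1) continuous_on_interior[of "{0..}" dg vp] by auto
  then have "isCont dg vp" "isCont g vp"
    using DERIV_isCont by blast+
  then have dgV: "((\<lambda>x. dg (V x)) \<longlongrightarrow> dg vp) at_top" and gV: "((\<lambda>x. g (V x)) \<longlongrightarrow> um) at_top"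
    using isCont_tendsto_compose V vp(2) by blast+
  show "(coef_d12 chi \<phi> U V \<longlongrightarrow> - chi * um * deriv \<phi> 0) at_top"
    unfolding coef_d12_def by (intro tendsto_intros U \<phi>'V')
  show "(coef_m11 chi s \<phi> V \<longlongrightarrow> s - chi * \<phi> 0) at_top"
    unfolding coef_m11_def by (intro tendsto_intros \<phi>V')
  show "(coef_n22 \<epsilon> dg V \<longlongrightarrow> - dg vp / \<epsilon>) at_top"
    unfolding coef_n22_def divide_inverse by (intro tendsto_intros dgV)
  have "deriv (\<lambda>\<eta>. \<phi> (deriv V \<eta>)) x = deriv \<phi> (deriv V x) * (- \<epsilon> * s * deriv V x - U x + g (V x))" for x
    using \<phi>(1) V' by (intro DERIV_imp_deriv DERIV_chain2) auto
  moreover have "((\<lambda>x. - chi * (deriv \<phi> (deriv V x) * (- \<epsilon> * s * deriv V x - U x + g (V x))))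
      \<longlongrightarrow> - chi * (deriv \<phi> 0 * (- \<epsilon> * s * 0 - um + um))) at_top"
    by (intro tendsto_intros \<phi>'V' U gV \<open>(deriv V \<longlongrightarrow> 0) at_top\<close>)
  ultimately show "(coef_n11 chi \<phi> V \<longlongrightarrow> 0) at_top"
    by (simp add: coef_n11_def[abs_def])
  have "((\<lambda>\<eta>. U \<eta> * deriv \<phi> (deriv V \<eta>)) \<longlongrightarrow> um * deriv \<phi> 0) at_top"
    by (intro tendsto_intros U \<phi>'V')
  then show "(coef_m12 chi \<phi> U V \<longlongrightarrow> 0) at_top"
    using \<open>chi > 0\<close> diff m12 by (intro coef_m12_tendsto_0) auto
qed

section \<open>Wave packets\<close>

definition wave_packet :: "real \<Rightarrow> real \<Rightarrow> real \<Rightarrow> nat \<Rightarrow> real \<Rightarrow> complex" where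
  "wave_packet k a b m x =
     exp (\<i> * of_real k * of_real x) / (1 - \<i> * (of_real x - of_real a) / of_real b) ^ m"

lemma wave_packet_denominator_eq:
  "(1 - \<i> * (of_real x - of_real a) / of_real b :: complex) = Complex 1 (- ((x - a) / b))"
  by (simp add: complex_eq_iff)

lemma wave_packet_denominator_nonzero: "1 - \<i> * (of_real x - of_real a) / of_real b \<noteq> (0::complex)"
  by (simp add: wave_packet_denominator_eq complex_eq_iff)

lemma has_field_derivative_divide_power:
  fixes f g :: "complex \<Rightarrow> complex"
  assumes "(f has_field_derivative f') (at t)" "(g has_field_derivative g') (at t)" "g t \<noteq> 0"
  shows "((\<lambda>t. f t / g t ^ m) has_field_derivative f' / g t ^ m - of_nat m * f t * g' / g t ^ Suc m) (at t)"
proof -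
  have "((\<lambda>t. f t / g t ^ m) has_field_derivative
      (f' * g t ^ m - f t * (of_nat m * g t ^ (m - 1) * g')) / (g t ^ m * g t ^ m)) (at t)"
    using assms by (auto intro!: derivative_eq_intros)
  moreover have "(f' * g t ^ m - f t * (of_nat m * g t ^ (m - 1) * g')) / (g t ^ m * g t ^ m)
      = f' / g t ^ m - of_nat m * f t * g' / g t ^ Suc m"
    using assms(3) by (cases m) (simp_all add: field_simps)
  ultimately show ?thesis
    by simp
qed

lemma wave_packet_has_vector_derivative:
  assumes "b \<noteq> 0"
  shows "(wave_packet k a b m has_vector_derivative
      \<i> * of_real k * wave_packet k a b m x + (\<i> * of_nat m / of_real b) * wave_packet k a b (Suc m) x) (at x)"
proof -
  define E where "E = exp (\<i> * of_real k * of_real x)"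
  define Z where "Z = 1 - \<i> * (of_real x - of_real a) / (of_real b :: complex)"
  have "Z \<noteq> 0"
    unfolding Z_def by (rule wave_packet_denominator_nonzero)
  have "((\<lambda>t. exp (\<i> * of_real k * t) / (1 - \<i> * (t - of_real a) / of_real b) ^ m) has_field_derivative
      \<i> * of_real k * E / Z ^ m - of_nat m * E * (- \<i> / of_real b) / Z ^ Suc m) (at (of_real x))"
    unfolding E_def Z_def
    by (intro has_field_derivative_divide_power wave_packet_denominator_nonzero)
      (use assms in \<open>auto intro!: derivative_eq_intros\<close>)
  moreover have "\<i> * of_real k * E / Z ^ m - of_nat m * E * (- \<i> / of_real b) / Z ^ Suc m
      = \<i> * of_real k * wave_packet k a b m x + (\<i> * of_nat m / of_real b) * wave_packet k a b (Suc m) x"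
    unfolding wave_packet_def E_def[symmetric] Z_def[symmetric] using \<open>Z \<noteq> 0\<close>
    by (simp add: field_simps)
  ultimately show ?thesis
    using has_vector_derivative_real_field by (fastforce simp: wave_packet_def[abs_def])
qed

lemma norm_wave_packet: "norm (wave_packet k a b m x) = 1 / sqrt (1 + ((x - a) / b)\<^sup>2) ^ m"
proof -
  have "norm (exp (\<i> * of_real k * of_real x)) = 1"
    by (metis mult.commute mult.left_commute norm_exp_i_times of_real_mult)
  moreover have "norm (1 - \<i> * (of_real x - of_real a) / of_real b :: complex) = sqrt (1 + ((x - a) / b)\<^sup>2)"
    by (simp add: wave_packet_denominator_eq cmod_def)
  ultimately show ?thesis
    by (simp add: wave_packet_def norm_divide norm_power)
qed

lemma norm_wave_packet_le_1: "norm (wave_packet k a b m x) \<le> 1"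
proof -
  have "1 \<le> sqrt (1 + ((x - a) / b)\<^sup>2) ^ m"
    by (simp add: one_le_power)
  then show ?thesis
    unfolding norm_wave_packet by (simp add: divide_le_eq_1 add_pos_nonneg)
qed

lemma norm_wave_packet_2: "norm (wave_packet k a b 2 x) = 1 / (1 + ((x - a) / b)\<^sup>2)"
  unfolding norm_wave_packet by (simp add: add_nonneg_nonneg)

text \<open>Differentiating a packet of order \<open>m\<close> only produces orders \<open>m\<close> and \<open>m + 1\<close>.\<close>
definition packet_comb :: "real \<Rightarrow> real \<Rightarrow> real \<Rightarrow> complex \<Rightarrow> complex \<Rightarrow> complex \<Rightarrow> complex \<Rightarrow> real \<Rightarrow> complex" where
  "packet_comb k a b c2 c3 c4 c5 x =
     c2 * wave_packet k a b 2 x + c3 * wave_packet k a b 3 x + c4 * wave_packet k a b 4 x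
       + c5 * wave_packet k a b 5 x"

lemma packet_comb_has_vector_derivative:
  assumes "b \<noteq> 0"
    and "d2 = \<i> * of_real k * c2" "d3 = \<i> * of_real k * c3 + (2 * \<i> / of_real b) * c2"
    "d4 = \<i> * of_real k * c4 + (3 * \<i> / of_real b) * c3" "d5 = (4 * \<i> / of_real b) * c4"
  shows "(packet_comb k a b c2 c3 c4 0 has_vector_derivative packet_comb k a b d2 d3 d4 d5 x) (at x)"
proof -
  note G = wave_packet_has_vector_derivative[OF assms(1), of k a _ x]
  have "((\<lambda>x. c2 * wave_packet k a b 2 x + c3 * wave_packet k a b 3 x + c4 * wave_packet k a b 4 x)
      has_vector_derivative
        c2 * (\<i> * of_real k * wave_packet k a b 2 x + (\<i> * of_nat 2 / of_real b) * wave_packet k a b (Suc 2) x)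
      + c3 * (\<i> * of_real k * wave_packet k a b 3 x + (\<i> * of_nat 3 / of_real b) * wave_packet k a b (Suc 3) x)
      + c4 * (\<i> * of_real k * wave_packet k a b 4 x + (\<i> * of_nat 4 / of_real b) * wave_packet k a b (Suc 4) x))
      (at x)"
    by (intro has_vector_derivative_add has_vector_derivative_mult_right G)
  then show ?thesis
    unfolding packet_comb_def assms(2-5) by (simp add: numeral_eq_Suc algebra_simps)
qed

lemma bounded_range_packet_comb: "bounded (range (packet_comb k a b c2 c3 c4 c5))"
proof -
  have "norm (c * wave_packet k a b m x) \<le> norm c" for c m x
    using norm_wave_packet_le_1 by (simp add: norm_mult mult_left_le)
  then have "norm (packet_comb k a b c2 c3 c4 c5 x) \<le> norm c2 + norm c3 + norm c4 + norm c5" for x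
    unfolding packet_comb_def by (intro order_trans[OF norm_triangle_ineq] add_mono) auto
  then show ?thesis
    unfolding bounded_iff by blast
qed

lemma wave_packet_profile:
  fixes k a b :: real and w1 w2 :: complex
  assumes "b \<noteq> 0"
  defines "G \<equiv> wave_packet k a b"
  shows "(\<lambda>x. (G 2 x * w1, G 2 x * w2)) \<in> Dom2"
    and "vector_derivative (\<lambda>x. (G 2 x * w1, G 2 x * w2)) (at x)
      = ((\<i> * of_real k * G 2 x + (2 * \<i> / of_real b) * G 3 x) * w1,
         (\<i> * of_real k * G 2 x + (2 * \<i> / of_real b) * G 3 x) * w2)"
    and "vector_derivative (\<lambda>y. vector_derivative (\<lambda>x. (G 2 x * w1, G 2 x * w2)) (at y)) (at x)
      = ((- of_real (k\<^sup>2) * G 2 x + (- of_real (4 * k / b) * G 3 x - of_real (6 / b\<^sup>2) * G 4 x)) * w1,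
         (- of_real (k\<^sup>2) * G 2 x + (- of_real (4 * k / b) * G 3 x - of_real (6 / b\<^sup>2) * G 4 x)) * w2)"
proof -
  have d1: "(packet_comb k a b 1 0 0 0 has_vector_derivative
      packet_comb k a b (\<i> * of_real k) (2 * \<i> / of_real b) 0 0 x) (at x)" for x
    by (rule packet_comb_has_vector_derivative[OF assms(1)]) simp_all
  have d2: "(packet_comb k a b (\<i> * of_real k) (2 * \<i> / of_real b) 0 0 has_vector_derivative
      packet_comb k a b (- of_real (k\<^sup>2)) (- of_real (4 * k / b)) (- of_real (6 / b\<^sup>2)) 0 x) (at x)" for x
    by (intro packet_comb_has_vector_derivative[OF assms(1)])
      (simp_all add: power2_eq_square mult_ac)
  have d3: "(packet_comb k a b (- of_real (k\<^sup>2)) (- of_real (4 * k / b)) (- of_real (6 / b\<^sup>2)) 0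
      has_vector_derivative packet_comb k a b (\<i> * of_real k * - of_real (k\<^sup>2))
        (\<i> * of_real k * - of_real (4 * k / b) + (2 * \<i> / of_real b) * - of_real (k\<^sup>2))
        (\<i> * of_real k * - of_real (6 / b\<^sup>2) + (3 * \<i> / of_real b) * - of_real (4 * k / b))
        ((4 * \<i> / of_real b) * - of_real (6 / b\<^sup>2)) x) (at x)" for x
    by (rule packet_comb_has_vector_derivative[OF assms(1) refl refl refl refl])
  note P = profile_in_Dom2[OF d1 d2 d3 bounded_range_packet_comb bounded_range_packet_comb
      bounded_range_packet_comb bounded_range_packet_comb]
  have pc: "packet_comb k a b c2 c3 c4 0 x = c2 * G 2 x + c3 * G 3 x + c4 * G 4 x" for c2 c3 c4 x
    by (simp add: packet_comb_def G_def)
  have "packet_comb k a b 1 0 0 0 = G 2"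
    by (simp add: fun_eq_iff pc)
  note P = P[unfolded this]
  show "(\<lambda>x. (G 2 x * w1, G 2 x * w2)) \<in> Dom2"
    by (rule P(1))
  show "vector_derivative (\<lambda>x. (G 2 x * w1, G 2 x * w2)) (at x)
      = ((\<i> * of_real k * G 2 x + (2 * \<i> / of_real b) * G 3 x) * w1,
         (\<i> * of_real k * G 2 x + (2 * \<i> / of_real b) * G 3 x) * w2)"
    using P(2)[of w1 w2 x] by (simp only: pc mult_zero_left add_0_right)
  show "vector_derivative (\<lambda>y. vector_derivative (\<lambda>x. (G 2 x * w1, G 2 x * w2)) (at y)) (at x)
      = ((- of_real (k\<^sup>2) * G 2 x + (- of_real (4 * k / b) * G 3 x - of_real (6 / b\<^sup>2) * G 4 x)) * w1,
         (- of_real (k\<^sup>2) * G 2 x + (- of_real (4 * k / b) * G 3 x - of_real (6 / b\<^sup>2) * G 4 x)) * w2)"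
    using P(3)[of w1 w2 x] by (simp only: pc diff_conv_add_uminus mult_minus_left add.assoc)
qed

lemma norm_wave_packet_corrections:
  assumes "b \<ge> 1"
  shows "norm ((2 * \<i> / of_real b) * wave_packet k a b 3 x) \<le> 2 / b"
    and "norm (- of_real (4 * k / b) * wave_packet k a b 3 x - of_real (6 / b\<^sup>2) * wave_packet k a b 4 x)
      \<le> (4 * \<bar>k\<bar> + 6) / b"
proof -
  have G: "norm (c * wave_packet k a b m x) \<le> norm c" for c m
    using norm_wave_packet_le_1 by (simp add: norm_mult mult_left_le)
  show "norm ((2 * \<i> / of_real b) * wave_packet k a b 3 x) \<le> 2 / b"
    using G[of "2 * \<i> / of_real b" 3] assms by (simp add: norm_divide)
  have "6 / b\<^sup>2 \<le> 6 / b"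
    using assms by (simp add: divide_left_mono power2_eq_square mult_le_cancel_left1)
  moreover have "norm (of_real (6 / b\<^sup>2) * wave_packet k a b 4 x) \<le> 6 / b\<^sup>2"
    using G[of "of_real (6 / b\<^sup>2)" 4] by (simp only: norm_of_real) simp
  moreover have "norm (- of_real (4 * k / b) * wave_packet k a b 3 x) \<le> 4 * \<bar>k\<bar> / b"
    using G[of "- of_real (4 * k / b)" 3] assms by (simp only: norm_minus_cancel norm_of_real) simp
  ultimately have "norm (- of_real (4 * k / b) * wave_packet k a b 3 x) + norm (of_real (6 / b\<^sup>2) * wave_packet k a b 4 x)
      \<le> (4 * \<bar>k\<bar> + 6) / b"
    by (simp add: add_divide_distrib)
  then show "norm (- of_real (4 * k / b) * wave_packet k a b 3 x - of_real (6 / b\<^sup>2) * wave_packet k a b 4 x)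
      \<le> (4 * \<bar>k\<bar> + 6) / b"
    using norm_triangle_ineq4 order_trans by blast
qed

lemma wave_packet_tail_le:
  assumes "b > 0" "\<delta> > 0" "\<And>x. 0 \<le> \<Delta> x" "\<And>x. \<Delta> x \<le> B" "\<And>x. X \<le> x \<Longrightarrow> \<Delta> x \<le> \<delta>"
  shows "norm (wave_packet k (X + b * (B/\<delta> + 1)) b 2 x) * \<Delta> x \<le> \<delta>"
proof (cases "X \<le> x")
  case True
  have "norm (wave_packet k (X + b * (B/\<delta> + 1)) b 2 x) * \<Delta> x \<le> 1 * \<Delta> x"
    by (rule mult_right_mono[OF norm_wave_packet_le_1 assms(3)])
  then show ?thesis
    using assms(5)[OF True] by simp
next
  case False
  define T where "T = B/\<delta> + 1"
  have "B \<ge> 0"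
    using assms(3,4) order_trans by blast
  then have "T \<ge> 1"
    using assms(2) by (simp add: T_def)
  define t where "t = (x - (X + b * T)) / b"
  have "T \<le> - t"
    unfolding t_def using False assms(1) by (simp add: field_simps)
  then have "T * T \<le> (- t) * (- t)"
    using \<open>T \<ge> 1\<close> by (intro mult_mono) auto
  moreover have "T \<le> T * T"
    using mult_left_mono[OF \<open>1 \<le> T\<close>, of T] \<open>1 \<le> T\<close> by simp
  ultimately have "T \<le> 1 + ((x - (X + b * T)) / b)\<^sup>2"
    unfolding t_def[symmetric] by (simp add: power2_eq_square)
  then have "norm (wave_packet k (X + b * T) b 2 x) \<le> 1 / T"
    unfolding norm_wave_packet_2 using \<open>T \<ge> 1\<close> by (simp add: frac_le)
  then have "norm (wave_packet k (X + b * T) b 2 x) * \<Delta> x \<le> 1 / T * B"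
    using assms(3,4) \<open>T \<ge> 1\<close> by (intro mult_mono) auto
  also have "\<dots> \<le> \<delta>"
    using \<open>B \<ge> 0\<close> assms(2) by (simp add: T_def field_simps)
  finally show ?thesis
    by (simp add: T_def)
qed

section \<open>Weyl sequences from the limiting symbol\<close>

text \<open>
  \<open>w\<close> is a unit eigenvector, with eigenvalue \<open>lam\<close>, of the symbol \<open>-k\<^sup>2 D\<^sub>+ + i k M\<^sub>+ + N\<^sub>+\<close> of the
  limit operator as \<open>\<xi> \<rightarrow> +\<infinity>\<close>, where \<open>D\<^sub>+ = [[\<epsilon>, D], [0, 1/\<epsilon>]]\<close>,
  \<open>M\<^sub>+ = [[M, 0], [0, s]]\<close> and \<open>N\<^sub>+ = [[0, 0], [1/\<epsilon>, N]]\<close>.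
\<close>
definition symbol_eigenpair ::
  "real \<Rightarrow> real \<Rightarrow> real \<Rightarrow> real \<Rightarrow> real \<Rightarrow> real \<Rightarrow> complex \<Rightarrow> complex \<Rightarrow> complex \<Rightarrow> bool" where
  "symbol_eigenpair \<epsilon> s D M N k lam w1 w2 \<longleftrightarrow> norm (w1, w2) = 1 \<and>
     lam * w1 = - of_real (k\<^sup>2) * (of_real \<epsilon> * w1 + of_real D * w2) + \<i> * of_real k * (of_real M * w1) \<and>
     lam * w2 = - of_real (k\<^sup>2) * (of_real (1/\<epsilon>) * w2) + \<i> * of_real k * (of_real s * w2)
       + (of_real (1/\<epsilon>) * w1 + of_real N * w2)"

lemma norm_of_real_mult_le: "norm (w::complex) \<le> 1 \<Longrightarrow> norm (of_real c * w) \<le> \<bar>c\<bar>"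
  by (simp add: norm_mult mult_left_le)

lemma norm_of_real_comb_le:
  assumes "norm (w1::complex) \<le> 1" "norm w2 \<le> 1"
  shows "norm (of_real a * w1 + of_real b * w2) \<le> \<bar>a\<bar> + \<bar>b\<bar>"
  by (rule order_trans[OF norm_triangle_ineq
        add_mono[OF norm_of_real_mult_le[OF assms(1)] norm_of_real_mult_le[OF assms(2)]]])

lemma symbol_eigenpair_residual_eq:
  fixes lam w1 w2 g \<alpha> \<beta> :: complex and \<epsilon> s k D M N d12 m11 m12 n11 n22 :: real
  assumes "symbol_eigenpair \<epsilon> s D M N k lam w1 w2" and "\<epsilon> > 0"
  shows "lam * (g * w1) - (of_real \<epsilon> * ((- of_real (k\<^sup>2) * g + \<beta>) * w1)
        + of_real d12 * ((- of_real (k\<^sup>2) * g + \<beta>) * w2) + of_real m11 * ((\<i> * of_real k * g + \<alpha>) * w1)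
        + of_real m12 * ((\<i> * of_real k * g + \<alpha>) * w2) + of_real n11 * (g * w1))
      = g * ((of_real (- n11) * w1 + of_real (k\<^sup>2 * (d12 - D)) * w2)
          - \<i> * of_real k * (of_real (m11 - M) * w1 + of_real m12 * w2))
        - ((of_real \<epsilon> * w1 + of_real d12 * w2) * \<beta> + (of_real m11 * w1 + of_real m12 * w2) * \<alpha>)"
    and "lam * (g * w2) - (of_real (1/\<epsilon>) * ((- of_real (k\<^sup>2) * g + \<beta>) * w2)
        + of_real s * ((\<i> * of_real k * g + \<alpha>) * w2) + of_real (1/\<epsilon>) * (g * w1) + of_real n22 * (g * w2))
      = g * (of_real (N - n22) * w2) - (of_real (1/\<epsilon>) * \<beta> + of_real s * \<alpha>) * w2"
  using assms unfolding mult.left_commute[of lam g] symbol_eigenpair_def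
  by (simp_all only:) (simp_all add: field_simps)

lemma norm_symbol_residual_le:
  fixes w1 w2 g \<alpha> \<beta> :: complex and \<epsilon> s k D N d12 m11 M m12 n11 n22 K :: real
  assumes "norm (w1, w2) = 1" and "\<epsilon> > 0"
    and K: "\<bar>d12\<bar> \<le> K" "\<bar>m11\<bar> \<le> K" "\<bar>m12\<bar> \<le> K"
  shows "norm (g * ((of_real (- n11) * w1 + of_real (k\<^sup>2 * (d12 - D)) * w2)
          - \<i> * of_real k * (of_real (m11 - M) * w1 + of_real m12 * w2))
        - ((of_real \<epsilon> * w1 + of_real d12 * w2) * \<beta> + (of_real m11 * w1 + of_real m12 * w2) * \<alpha>),
      g * (of_real (N - n22) * w2) - (of_real (1/\<epsilon>) * \<beta> + of_real s * \<alpha>) * w2)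
    \<le> norm g * (k\<^sup>2 * \<bar>d12 - D\<bar> + \<bar>k\<bar> * (\<bar>m11 - M\<bar> + \<bar>m12\<bar>) + \<bar>n11\<bar> + \<bar>n22 - N\<bar>)
      + ((\<epsilon> + K + 1/\<epsilon>) * norm \<beta> + (2 * K + \<bar>s\<bar>) * norm \<alpha>)"
    (is "norm (g * ?X1 - ?Y1, g * ?X2 - ?Y2) \<le> _")
proof -
  have "norm w1 \<le> 1" "norm w2 \<le> 1"
    using assms(1) norm_fst_le[of w1 w2] norm_snd_le[of w2 w1] by auto
  note comb = norm_of_real_comb_le[OF this]
  have "norm ?X1 \<le> norm (of_real (- n11) * w1 + of_real (k\<^sup>2 * (d12 - D)) * w2)
      + \<bar>k\<bar> * norm (of_real (m11 - M) * w1 + of_real m12 * w2)"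
    by (rule order_trans[OF norm_triangle_ineq4]) (simp add: norm_mult)
  also have "\<dots> \<le> (\<bar>n11\<bar> + k\<^sup>2 * \<bar>d12 - D\<bar>) + \<bar>k\<bar> * (\<bar>m11 - M\<bar> + \<bar>m12\<bar>)"
    using comb[of "- n11" "k\<^sup>2 * (d12 - D)"]
    by (intro add_mono mult_left_mono comb) (simp_all add: abs_mult)
  finally have X1: "norm ?X1 \<le> \<bar>n11\<bar> + k\<^sup>2 * \<bar>d12 - D\<bar> + \<bar>k\<bar> * (\<bar>m11 - M\<bar> + \<bar>m12\<bar>)" .
  have "norm ?Y1 \<le> norm (of_real \<epsilon> * w1 + of_real d12 * w2) * norm \<beta>
      + norm (of_real m11 * w1 + of_real m12 * w2) * norm \<alpha>"
    by (rule order_trans[OF norm_triangle_ineq]) (simp add: norm_mult)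
  also have "\<dots> \<le> (\<epsilon> + K) * norm \<beta> + 2 * K * norm \<alpha>"
    using comb[of \<epsilon> d12] comb[of m11 m12] K \<open>\<epsilon> > 0\<close> by (intro add_mono mult_right_mono) auto
  finally have Y1: "norm ?Y1 \<le> (\<epsilon> + K) * norm \<beta> + 2 * K * norm \<alpha>" .
  have X2: "norm ?X2 \<le> \<bar>n22 - N\<bar>"
    using norm_of_real_mult_le[OF \<open>norm w2 \<le> 1\<close>, of "N - n22"] by linarith
  have "norm ?Y2 \<le> norm (of_real (1/\<epsilon>) * \<beta> + of_real s * \<alpha>)"
    using \<open>norm w2 \<le> 1\<close> by (simp add: norm_mult mult_left_le)
  also have "\<dots> \<le> 1/\<epsilon> * norm \<beta> + \<bar>s\<bar> * norm \<alpha>"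
    by (rule order_trans[OF norm_triangle_ineq]) (use \<open>\<epsilon> > 0\<close> in \<open>simp add: norm_mult norm_divide\<close>)
  finally have Y2: "norm ?Y2 \<le> 1/\<epsilon> * norm \<beta> + \<bar>s\<bar> * norm \<alpha>" .
  have "norm (g * ?X1 - ?Y1, g * ?X2 - ?Y2) \<le> (norm g * norm ?X1 + norm ?Y1) + (norm g * norm ?X2 + norm ?Y2)"
    by (rule order_trans[OF norm_Pair_le add_mono]; rule order_trans[OF norm_triangle_ineq4]; simp add: norm_mult)
  then show ?thesis
    using mult_left_mono[OF X1 norm_ge_zero[of g]] mult_left_mono[OF X2 norm_ge_zero[of g]] Y1 Y2
    unfolding distrib_left distrib_right by linarith
qed

lemma norm_Pair_scaled: "norm (c * w1, c * w2) = norm (c::complex) * norm (w1, w2)"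
  by (simp add: norm_Pair norm_mult power_mult_distrib distrib_left[symmetric] real_sqrt_mult)

lemma shiftop_wave_packet_le:
  assumes eig: "symbol_eigenpair \<epsilon> s D M N k lam w1 w2" and "\<epsilon> > 0" and "b \<ge> 1"
    and K: "\<bar>coef_d12 chi \<phi> U V x\<bar> \<le> K" "\<bar>coef_m11 chi s \<phi> V x\<bar> \<le> K" "\<bar>coef_m12 chi \<phi> U V x\<bar> \<le> K"
  shows "norm (shiftop lam (lin_op \<epsilon> chi s \<phi> dg U V)
      (\<lambda>x. (wave_packet k a b 2 x * w1, wave_packet k a b 2 x * w2)) x)
    \<le> norm (wave_packet k a b 2 x) * (k\<^sup>2 * \<bar>coef_d12 chi \<phi> U V x - D\<bar>
        + \<bar>k\<bar> * (\<bar>coef_m11 chi s \<phi> V x - M\<bar> + \<bar>coef_m12 chi \<phi> U V x\<bar>)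
        + \<bar>coef_n11 chi \<phi> V x\<bar> + \<bar>coef_n22 \<epsilon> dg V x - N\<bar>)
      + ((\<epsilon> + K + 1/\<epsilon>) * (4 * \<bar>k\<bar> + 6) + (2 * K + \<bar>s\<bar>) * 2) / b"
proof -
  let ?\<alpha> = "(2 * \<i> / of_real b) * wave_packet k a b 3 x"
  let ?\<beta> = "- of_real (4 * k / b) * wave_packet k a b 3 x - of_real (6 / b\<^sup>2) * wave_packet k a b 4 x"
  have "b \<noteq> 0"
    using \<open>b \<ge> 1\<close> by simp
  note profile = wave_packet_profile[OF this]
  have "norm (shiftop lam (lin_op \<epsilon> chi s \<phi> dg U V)
      (\<lambda>x. (wave_packet k a b 2 x * w1, wave_packet k a b 2 x * w2)) x)
    \<le> norm (wave_packet k a b 2 x) * (k\<^sup>2 * \<bar>coef_d12 chi \<phi> U V x - D\<bar>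
        + \<bar>k\<bar> * (\<bar>coef_m11 chi s \<phi> V x - M\<bar> + \<bar>coef_m12 chi \<phi> U V x\<bar>)
        + \<bar>coef_n11 chi \<phi> V x\<bar> + \<bar>coef_n22 \<epsilon> dg V x - N\<bar>)
      + ((\<epsilon> + K + 1/\<epsilon>) * norm ?\<beta> + (2 * K + \<bar>s\<bar>) * norm ?\<alpha>)"
    unfolding shiftop_lin_op_profile[OF refl profile(2,3)] symbol_eigenpair_residual_eq[OF eig \<open>\<epsilon> > 0\<close>]
    by (rule norm_symbol_residual_le[OF _ \<open>\<epsilon> > 0\<close> K]) (use eig in \<open>simp add: symbol_eigenpair_def\<close>)
  moreover have "(\<epsilon> + K + 1/\<epsilon>) * norm ?\<beta> + (2 * K + \<bar>s\<bar>) * norm ?\<alpha>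
      \<le> ((\<epsilon> + K + 1/\<epsilon>) * (4 * \<bar>k\<bar> + 6) + (2 * K + \<bar>s\<bar>) * 2) / b"
  proof -
    have "K \<ge> 0"
      using K(1) by linarith
    then have "(\<epsilon> + K + 1/\<epsilon>) * norm ?\<beta> + (2 * K + \<bar>s\<bar>) * norm ?\<alpha>
        \<le> (\<epsilon> + K + 1/\<epsilon>) * ((4 * \<bar>k\<bar> + 6) / b) + (2 * K + \<bar>s\<bar>) * (2 / b)"
      using norm_wave_packet_corrections[OF \<open>b \<ge> 1\<close>] \<open>\<epsilon> > 0\<close> by (intro add_mono mult_left_mono) auto
    also have "\<dots> = ((\<epsilon> + K + 1/\<epsilon>) * (4 * \<bar>k\<bar> + 6) + (2 * K + \<bar>s\<bar>) * 2) / b"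
      using \<open>b \<noteq> 0\<close> by (simp add: field_simps)
    finally show ?thesis .
  qed
  ultimately show ?thesis
    by linarith
qed

lemma symbol_eigenvalue_in_spec:
  fixes \<epsilon> chi s k D M N :: real and \<phi> dg U V :: "real \<Rightarrow> real" and lam w1 w2 :: complex
  assumes "\<epsilon> > 0"
    and bdd: "bounded (range (coef_d12 chi \<phi> U V))" "bounded (range (coef_m11 chi s \<phi> V))"
      "bounded (range (coef_m12 chi \<phi> U V))" "bounded (range (coef_n11 chi \<phi> V))"
      "bounded (range (coef_n22 \<epsilon> dg V))"
    and lim: "(coef_d12 chi \<phi> U V \<longlongrightarrow> D) at_top" "(coef_m11 chi s \<phi> V \<longlongrightarrow> M) at_top"
      "(coef_m12 chi \<phi> U V \<longlongrightarrow> 0) at_top" "(coef_n11 chi \<phi> V \<longlongrightarrow> 0) at_top"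
      "(coef_n22 \<epsilon> dg V \<longlongrightarrow> N) at_top"
    and eig: "symbol_eigenpair \<epsilon> s D M N k lam w1 w2"
  shows "lam \<in> spec (lin_op \<epsilon> chi s \<phi> dg U V)"
proof (rule approx_eigenfunctions_imp_spec)
  fix \<delta> :: real
  assume "\<delta> > 0"
  let ?d12 = "coef_d12 chi \<phi> U V" and ?m11 = "coef_m11 chi s \<phi> V" and ?m12 = "coef_m12 chi \<phi> U V"
    and ?n11 = "coef_n11 chi \<phi> V" and ?n22 = "coef_n22 \<epsilon> dg V"
  have "bounded (range ?d12 \<union> range ?m11 \<union> range ?m12 \<union> range ?n11 \<union> range ?n22)"
    using bdd by simp
  then obtain K where K: "\<And>x. \<bar>?d12 x\<bar> \<le> K" "\<And>x. \<bar>?m11 x\<bar> \<le> K" "\<And>x. \<bar>?m12 x\<bar> \<le> K"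
    "\<And>x. \<bar>?n11 x\<bar> \<le> K" "\<And>x. \<bar>?n22 x\<bar> \<le> K"
    unfolding bounded_iff by (metis UnCI rangeI real_norm_def)
  define \<Delta> where "\<Delta> = (\<lambda>x. k\<^sup>2 * \<bar>?d12 x - D\<bar> + \<bar>k\<bar> * (\<bar>?m11 x - M\<bar> + \<bar>?m12 x\<bar>) + \<bar>?n11 x\<bar> + \<bar>?n22 x - N\<bar>)"
  have "(\<Delta> \<longlongrightarrow> k\<^sup>2 * \<bar>D - D\<bar> + \<bar>k\<bar> * (\<bar>M - M\<bar> + \<bar>0\<bar>) + \<bar>0\<bar> + \<bar>N - N\<bar>) at_top"
    unfolding \<Delta>_def by (intro tendsto_intros lim)
  then have "eventually (\<lambda>x. \<Delta> x < \<delta>/2) at_top"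
    using \<open>\<delta> > 0\<close> by (intro order_tendstoD(2)) auto
  then obtain X where X: "\<And>x. X \<le> x \<Longrightarrow> \<Delta> x \<le> \<delta>/2"
    unfolding eventually_at_top_linorder by (meson less_imp_le)
  define B where "B = k\<^sup>2 * (K + \<bar>D\<bar>) + \<bar>k\<bar> * ((K + \<bar>M\<bar>) + K) + K + (K + \<bar>N\<bar>)"
  have "\<Delta> x \<le> B" for x
    unfolding \<Delta>_def B_def using K[of x]
    by (intro add_mono mult_left_mono) (auto simp: abs_diff_le_iff)
  \<comment> \<open>The width \<open>b\<close> makes the envelope corrections \<open>C / b\<close> small, the centre \<open>a\<close> puts the
    packet where \<open>\<Delta>\<close> is small.\<close>
  define C where "C = (\<epsilon> + K + 1/\<epsilon>) * (4 * \<bar>k\<bar> + 6) + (2 * K + \<bar>s\<bar>) * 2"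
  define b where "b = max 1 (2 * C / \<delta>)"
  have "b \<ge> 1" "2 * C / \<delta> \<le> b"
    by (simp_all add: b_def)
  then have "C / b \<le> \<delta>/2"
    using \<open>\<delta> > 0\<close> by (simp add: field_simps)
  define a where "a = X + b * (B / (\<delta>/2) + 1)"
  show "\<exists>p\<in>Dom2. (\<exists>x. 1 \<le> norm (p x)) \<and> (\<forall>x. norm (shiftop lam (lin_op \<epsilon> chi s \<phi> dg U V) p x) \<le> \<delta>)"
  proof (intro bexI conjI exI allI)
    show "(\<lambda>x. (wave_packet k a b 2 x * w1, wave_packet k a b 2 x * w2)) \<in> Dom2"
      using wave_packet_profile(1) \<open>b \<ge> 1\<close> by simp
    show "1 \<le> norm ((\<lambda>x. (wave_packet k a b 2 x * w1, wave_packet k a b 2 x * w2)) a)"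
      using eig by (simp add: norm_Pair_scaled norm_wave_packet_2 symbol_eigenpair_def)
    fix x
    have "norm (wave_packet k a b 2 x) * \<Delta> x \<le> \<delta>/2"
      unfolding a_def
      by (rule wave_packet_tail_le) (use \<open>b \<ge> 1\<close> \<open>\<delta> > 0\<close> \<open>\<And>x. \<Delta> x \<le> B\<close> X in \<open>auto simp: \<Delta>_def\<close>)
    then show "norm (shiftop lam (lin_op \<epsilon> chi s \<phi> dg U V)
        (\<lambda>x. (wave_packet k a b 2 x * w1, wave_packet k a b 2 x * w2)) x) \<le> \<delta>"
      using shiftop_wave_packet_le[OF eig \<open>\<epsilon> > 0\<close> \<open>b \<ge> 1\<close> K(1-3), where x=x and dg=dg and a=a] \<open>C / b \<le> \<delta>/2\<close>
      unfolding \<Delta>_def C_def by linarith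
  qed
qed

section \<open>The dispersion relation\<close>

text \<open>The characteristic polynomial \<open>det (lam - (-k\<^sup>2 D\<^sub>+ + i k M\<^sub>+ + N\<^sub>+))\<close>.\<close>
definition dispersion :: "real \<Rightarrow> real \<Rightarrow> real \<Rightarrow> real \<Rightarrow> real \<Rightarrow> real \<Rightarrow> complex \<Rightarrow> complex" where
  "dispersion \<epsilon> s D M N k lam =
     (lam + of_real (k\<^sup>2 * \<epsilon>) - \<i> * of_real k * of_real M)
       * (lam + of_real (k\<^sup>2 / \<epsilon>) - \<i> * of_real k * of_real s - of_real N)
     + of_real (k\<^sup>2 * D / \<epsilon>)"

lemma dispersion_root_imp_symbol_eigenpair:
  assumes "\<epsilon> > 0" "dispersion \<epsilon> s D M N k lam = 0"
  shows "\<exists>w1 w2. symbol_eigenpair \<epsilon> s D M N k lam w1 w2"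
proof -
  define v1 where "v1 = lam + of_real (k\<^sup>2 / \<epsilon>) - \<i> * of_real k * of_real s - of_real N"
  define v2 where "v2 = (of_real (1/\<epsilon>) :: complex)"
  have "norm v2 > 0"
    using \<open>\<epsilon> > 0\<close> by (simp add: v2_def)
  then have "norm (v1, v2) > 0"
    using norm_snd_le[of v2 v1] by linarith
  define c where "c = (of_real (1 / norm (v1, v2)) :: complex)"
  have norm_1: "norm (c * v1, c * v2) = 1"
    unfolding norm_Pair_scaled c_def norm_of_real using \<open>norm (v1, v2) > 0\<close> by simp
  have dispersion_eq: "dispersion \<epsilon> s D M N k lam
      = (lam + of_real (k\<^sup>2 * \<epsilon>) - \<i> * of_real k * of_real M) * v1 + of_real (k\<^sup>2 * D) * v2"
    by (simp add: dispersion_def v1_def v2_def)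
  have "lam * (c * v1) - (- of_real (k\<^sup>2) * (of_real \<epsilon> * (c * v1) + of_real D * (c * v2))
      + \<i> * of_real k * (of_real M * (c * v1))) = c * dispersion \<epsilon> s D M N k lam"
    unfolding dispersion_eq by (simp add: algebra_simps)
  moreover have "lam * (c * v2) = - of_real (k\<^sup>2) * (of_real (1/\<epsilon>) * (c * v2)) + \<i> * of_real k * (of_real s * (c * v2))
      + (of_real (1/\<epsilon>) * (c * v1) + of_real N * (c * v2))"
    by (simp add: v1_def v2_def algebra_simps)
  ultimately show ?thesis
    unfolding symbol_eigenpair_def using norm_1 assms(2) by auto
qed

lemma complex_quadratic_factor:
  fixes p q e :: complex
  obtains r1 r2 where "\<And>z. (z + p) * (z + q) + e = (z - r1) * (z - r2)"
proof
  fix z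
  define S where "S = csqrt ((p - q)\<^sup>2 - 4 * e)"
  have "(z - (- (p + q) + S) / 2) * (z - (- (p + q) - S) / 2) = (z + p) * (z + q) + ((p - q)\<^sup>2 - S\<^sup>2) / 4"
    by (simp add: field_simps power2_eq_square)
  then show "(z + p) * (z + q) + e = (z - (- (p + q) + S) / 2) * (z - (- (p + q) - S) / 2)"
    by (simp add: S_def)
qed

lemma dispersion_at_N_nonzero_small:
  assumes "\<epsilon> > 0" "s > 0" "N > 0" "r > 0"
  shows "\<exists>k. dispersion \<epsilon> s D M N k (of_real N) \<noteq> 0 \<and> norm (dispersion \<epsilon> s D M N k (of_real N)) < r"
proof -
  have "((\<lambda>k. dispersion \<epsilon> s D M N k (of_real N)) \<longlongrightarrow> dispersion \<epsilon> s D M N 0 (of_real N)) (at 0)"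
    unfolding dispersion_def using \<open>\<epsilon> > 0\<close> by (intro tendsto_intros) auto
  then have "eventually (\<lambda>k. norm (dispersion \<epsilon> s D M N k (of_real N)) < r) (at (0::real))"
    using \<open>r > 0\<close> by (intro order_tendstoD(2)[OF tendsto_norm_zero]) (simp_all add: dispersion_def)
  moreover have "((\<lambda>k::real. k\<^sup>2 * (\<epsilon> * s + M / \<epsilon>)) \<longlongrightarrow> 0) (at 0)"
    by (rule tendsto_eq_intros refl | simp)+
  then have "eventually (\<lambda>k::real. k\<^sup>2 * (\<epsilon> * s + M / \<epsilon>) > - (s * N)) (at 0)"
    using assms by (intro order_tendstoD(1)) auto
  ultimately have "eventually (\<lambda>k. norm (dispersion \<epsilon> s D M N k (of_real N)) < r
      \<and> k\<^sup>2 * (\<epsilon> * s + M / \<epsilon>) > - (s * N) \<and> k \<noteq> 0) (at 0)"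
    by (intro eventually_conj eventually_neq_at_within)
  then obtain k where k: "norm (dispersion \<epsilon> s D M N k (of_real N)) < r"
    "k\<^sup>2 * (\<epsilon> * s + M / \<epsilon>) > - (s * N)" "k \<noteq> 0"
    using eventually_happens'[OF at_neq_bot] by blast
  have "Im (dispersion \<epsilon> s D M N k (of_real N)) = - k * (s * N + k\<^sup>2 * (\<epsilon> * s + M / \<epsilon>))"
    by (simp add: dispersion_def algebra_simps power2_eq_square)
  then have "dispersion \<epsilon> s D M N k (of_real N) \<noteq> 0"
    using k by auto
  then show ?thesis
    using k by blast
qed

lemma dispersion_root_near_N:
  assumes "\<epsilon> > 0" "s > 0" "N > 0" "r > 0"
  shows "\<exists>k lam. dispersion \<epsilon> s D M N k lam = 0 \<and> lam \<noteq> of_real N \<and> dist lam (of_real N) < r"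
proof -
  obtain k where k: "dispersion \<epsilon> s D M N k (of_real N) \<noteq> 0" "norm (dispersion \<epsilon> s D M N k (of_real N)) < r\<^sup>2"
    using dispersion_at_N_nonzero_small[OF assms(1-3)] \<open>r > 0\<close> by (meson zero_less_power)
  obtain r1 r2 where r12: "\<And>z. (z + (of_real (k\<^sup>2 * \<epsilon>) - \<i> * of_real k * of_real M))
      * (z + (of_real (k\<^sup>2 / \<epsilon>) - \<i> * of_real k * of_real s - of_real N)) + of_real (k\<^sup>2 * D / \<epsilon>)
      = (z - r1) * (z - r2)"
    by (rule complex_quadratic_factor[of "of_real (k\<^sup>2 * \<epsilon>) - \<i> * of_real k * of_real M"
          "of_real (k\<^sup>2 / \<epsilon>) - \<i> * of_real k * of_real s - of_real N" "of_real (k\<^sup>2 * D / \<epsilon>)"]) blast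
  have factor: "dispersion \<epsilon> s D M N k z = (z - r1) * (z - r2)" for z
    unfolding r12[symmetric] dispersion_def by (simp add: algebra_simps)
  have "norm (of_real N - r1) * norm (of_real N - r2) < r * r"
    using k(2) by (simp add: factor norm_mult power2_eq_square)
  then have "norm (of_real N - r1) < r \<or> norm (of_real N - r2) < r"
    using mult_mono[of r "norm (of_real N - r1)" r "norm (of_real N - r2)"] \<open>r > 0\<close> by force
  moreover have "r1 \<noteq> of_real N" "r2 \<noteq> of_real N"
    using k(1) by (auto simp: factor)
  moreover have "dispersion \<epsilon> s D M N k r1 = 0" "dispersion \<epsilon> s D M N k r2 = 0"
    by (simp_all add: factor)
  ultimately show ?thesis
    unfolding dist_norm by (metis norm_minus_commute)
qed

lemma ess_spec_if_dispersion_roots_in_spec: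
  assumes "\<epsilon> > 0" "s > 0" "N > 0"
    and roots: "\<And>k lam. dispersion \<epsilon> s D M N k lam = 0 \<Longrightarrow> lam \<in> spec L"
  shows "of_real N \<in> ess_spec L"
proof (rule nonisolated_spec_imp_ess_spec)
  show "of_real N \<in> spec L"
    by (rule roots[of 0]) (simp add: dispersion_def)
  fix r :: real
  assume "r > 0"
  then show "\<exists>\<mu>\<in>spec L. \<mu> \<noteq> of_real N \<and> dist \<mu> (of_real N) < r"
    using dispersion_root_near_N[OF assms(1-3)] roots by blast
qed

lemma pulse_linearization_ess_spec:
  fixes U V \<phi> g dg :: "real \<Rightarrow> real"
  assumes \<phi>: "\<forall>x. (\<phi> has_real_derivative deriv \<phi> x) (at x)" "continuous_on UNIV (deriv \<phi>)"
    and g: "continuous_on {0..} dg" "\<forall>x\<ge>0. (g has_real_derivative dg x) (at x within {0..})"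
    and vp: "vp > 0" "g vp = um" "dg vp < 0"
    and "chi > 0" "s > 0" "\<epsilon> > 0"
    and pulse: "traveling_pulse \<epsilon> chi s \<phi> g um vp vm U V"
    and diff: "\<forall>\<xi>. (\<lambda>\<eta>. U \<eta> * deriv \<phi> (deriv V \<eta>)) differentiable (at \<xi>)"
  shows "complex_of_real (- dg vp / \<epsilon>) \<in> ess_spec (lin_op \<epsilon> chi s \<phi> dg U V)"
proof (cases "\<forall>p\<in>Dom2. buc (shiftop 0 (lin_op \<epsilon> chi s \<phi> dg U V) p)")
  case True
  note buc = coefficients_buc[OF True]
  note lim = coef_limits_at_top[OF \<phi> g vp(1,2) \<open>chi > 0\<close> pulse diff buc(3)]
  have "- dg vp / \<epsilon> > 0"
    using vp(3) \<open>\<epsilon> > 0\<close> by (simp add: divide_neg_pos)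
  then show ?thesis
  proof (rule ess_spec_if_dispersion_roots_in_spec[OF \<open>\<epsilon> > 0\<close> \<open>s > 0\<close>])
    fix k lam
    assume "dispersion \<epsilon> s (- chi * um * deriv \<phi> 0) (s - chi * \<phi> 0) (- dg vp / \<epsilon>) k lam = 0"
    then obtain w1 w2 where eig:
      "symbol_eigenpair \<epsilon> s (- chi * um * deriv \<phi> 0) (s - chi * \<phi> 0) (- dg vp / \<epsilon>) k lam w1 w2"
      using dispersion_root_imp_symbol_eigenpair \<open>\<epsilon> > 0\<close> by blast
    show "lam \<in> spec (lin_op \<epsilon> chi s \<phi> dg U V)"
      by (rule symbol_eigenvalue_in_spec[OF \<open>\<epsilon> > 0\<close> _ _ _ _ _ lim eig])
        (use buc in \<open>simp_all add: buc_def\<close>)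
  qed
next
  case False
  then obtain p where "p \<in> Dom2" "\<not> buc (shiftop 0 (lin_op \<epsilon> chi s \<phi> dg U V) p)"
    by blast
  then show ?thesis
    by (intro spec_UNIV_imp_ess_spec not_buc_imp_spec_UNIV)
qed

theorem theorem3p4:
  fixes chi s \<beta> um vp vm \<epsilon>0 :: real
    and \<phi> g dg :: "real \<Rightarrow> real"
    and U V :: "real \<Rightarrow> real \<Rightarrow> real"
  assumes chi_pos: "chi > 0"
    and phi_C1: "\<forall>x. (\<phi> has_real_derivative deriv \<phi> x) (at x)" "continuous_on UNIV (deriv \<phi>)"
    and phi_deriv_pos: "\<forall>x. deriv \<phi> x > 0"
    and phi0: "\<phi> 0 > 0"
    and g_C1: "continuous_on {0..} dg"
      "\<forall>x\<ge>0. (g has_real_derivative dg x) (at x within {0..})"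
    and g_pos: "\<forall>x\<ge>0. g x > 0"
    and beta: "\<beta> > 0" "\<forall>x. 0 \<le> x \<and> x < \<beta> \<longrightarrow> dg x < 0" "\<forall>x. x > \<beta> \<longrightarrow> dg x > 0"
    and um: "g \<beta> < um" "um < g 0"
      "\<exists>L. ((\<lambda>x. ereal (g x)) \<longlongrightarrow> L) at_top \<and> ereal um < L"
    and vpm: "0 < vp" "vp < \<beta>" "\<beta> < vm" "g vp = um" "g vm = um"
    and speed: "s > chi * \<phi> 0"
    and eps0: "\<epsilon>0 > 0"
    and pulses: "\<forall>\<epsilon>. 0 < \<epsilon> \<and> \<epsilon> < \<epsilon>0 \<longrightarrow>
        traveling_pulse \<epsilon> chi s \<phi> g um vp vm (U \<epsilon>) (V \<epsilon>)"
    and coeff_wd: "\<forall>\<epsilon>. 0 < \<epsilon> \<and> \<epsilon> < \<epsilon>0 \<longrightarrow>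
        (\<forall>\<xi>. (\<lambda>\<eta>. U \<epsilon> \<eta> * deriv \<phi> (deriv (V \<epsilon>) \<eta>)) differentiable (at \<xi>))"
  shows "\<exists>\<epsilon>1>0. \<forall>\<epsilon>. 0 < \<epsilon> \<and> \<epsilon> < \<epsilon>1 \<longrightarrow>
           (\<exists>lam\<in>ess_spec (lin_op \<epsilon> chi s \<phi> dg (U \<epsilon>) (V \<epsilon>)). Re lam > 0)"
proof (intro exI[of _ \<epsilon>0] conjI allI impI)
  show "\<epsilon>0 > 0"
    by (rule eps0)
  fix \<epsilon> :: real
  assume \<epsilon>: "0 < \<epsilon> \<and> \<epsilon> < \<epsilon>0"
  have "dg vp < 0"
    using beta(2) vpm by simp
  moreover have "s > 0"
    using speed mult_pos_pos[OF chi_pos phi0] by linarith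
  ultimately have "complex_of_real (- dg vp / \<epsilon>) \<in> ess_spec (lin_op \<epsilon> chi s \<phi> dg (U \<epsilon>) (V \<epsilon>))"
    using \<epsilon> pulses coeff_wd by (intro pulse_linearization_ess_spec[OF phi_C1 g_C1 vpm(1,4) _ chi_pos]) auto
  moreover have "- dg vp / \<epsilon> > 0"
    using \<open>dg vp < 0\<close> \<epsilon> by (simp add: divide_neg_pos)
  ultimately show "\<exists>lam\<in>ess_spec (lin_op \<epsilon> chi s \<phi> dg (U \<epsilon>) (V \<epsilon>)). Re lam > 0"
    by force
qed

end
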